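(* Let $d\ge2$, $n\ge1$, $p\ge1$, $k\in\{1,\ldots,n\}$, and let $I=(i_1,\ldots,i_n)$ be an admissible multi-index. There exists a polynomial $Q_{k,I}(z_1,\ldots,z_n)$ such that for every periodic point $\mathbf w_0=(w_1,\ldots,w_n)$ of $F_0$ of period $p$ with $w_j\ne0$ for all $j$, $$\partial_{k,I}\rho_{k,\mathbf w_0}(F_0)=w_k^{-d^{p-1}}Q_{k,I}(\mathbf w_0),$$ and $\deg_{z_j}Q_{k,I}=i_jd^{p-1}$ for $j\ne k$, while $\deg_{z_k}Q_{k,I}=(i_k+1)d^{p-1}-1$ if $0\le i_k\le d-2$ and $\deg_{z_k}Q_{k,I}=d^{p-1}-1$ if $i_k=d-1$. Furthermore, if $p\ge2$, then for any two distinct admissible multi-indices $I$ and $I'$, the polynomials $Q_{k,I}$ and $Q_{k,I'}$ do not contain monomials that are proportional to each other.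
   Context: $F_0(z_1,\ldots,z_n)=(z_1^d,\ldots,z_n^d)$. A multi-index $I=(i_1,\ldots,i_n)\in\mathbb{Z}_{\ge0}^n$ with $i_1+\cdots+i_n\le d$ is admissible if $I\ne(0,\ldots,0)$ and $i_j\ne d$ for all $j$. For $G$ near $F_0$, $\mathbf w(G)$ is the analytic continuation of the period-$p$ point $\mathbf w_0$ and $\rho_{k,\mathbf w_0}(G)$ is the $k$-th diagonal entry of $DG^p$ at $\mathbf w(G)$. With $P_{k,I}(\mathbf z)=z_1^{i_1}\cdots z_n^{i_n}\mathbf e_k$ ($\mathbf e_k$ the $k$-th unit vector), $\partial_{k,I}\rho_{k,\mathbf w_0}(G)=\frac{d}{dt}\big|_{t=0}\rho_{k,\mathbf w_0}(G+tP_{k,I})$. *)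

theory Defs
  imports "HOL-Analysis.Analysis"
begin

text \<open>Points of C^n are elements of complex^'n (the finite index type 'n has n elements).
A polynomial in z_1..z_n is represented by its coefficient function
(exponent vector => coefficient) with finite support.\<close>

definition is_mpoly :: "(('n::finite \<Rightarrow> nat) \<Rightarrow> complex) \<Rightarrow> bool" where
  "is_mpoly Q \<longleftrightarrow> finite {m. Q m \<noteq> 0}"

definition mpoly_eval :: "(('n::finite \<Rightarrow> nat) \<Rightarrow> complex) \<Rightarrow> complex^'n \<Rightarrow> complex" where
  "mpoly_eval Q z = (\<Sum>m\<in>{m. Q m \<noteq> 0}. Q m * (\<Prod>j\<in>UNIV. (z $ j) ^ (m j)))"

text \<open>Degree in the variable z_j (the zero polynomial gets degree 0).\<close>
definition mpoly_deg_in :: "(('n::finite \<Rightarrow> nat) \<Rightarrow> complex) \<Rightarrow> 'n \<Rightarrow> nat" where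
  "mpoly_deg_in Q j = Max (insert 0 {m j | m. Q m \<noteq> 0})"

text \<open>Monomials of Q and Q' proportional to each other = same exponent, both coefficients nonzero.\<close>
definition no_proportional_monomials ::
  "(('n::finite \<Rightarrow> nat) \<Rightarrow> complex) \<Rightarrow> (('n \<Rightarrow> nat) \<Rightarrow> complex) \<Rightarrow> bool" where
  "no_proportional_monomials Q Q' \<longleftrightarrow> (\<forall>m. \<not> (Q m \<noteq> 0 \<and> Q' m \<noteq> 0))"

definition admissible :: "nat \<Rightarrow> ('n::finite \<Rightarrow> nat) \<Rightarrow> bool" where
  "admissible d I \<longleftrightarrow> (\<Sum>j\<in>UNIV. I j) \<le> d \<and> I \<noteq> (\<lambda>_. 0) \<and> (\<forall>j. I j \<noteq> d)"

definition F0 :: "nat \<Rightarrow> complex^'n \<Rightarrow> complex^'n" where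
  "F0 d z = (\<chi> j. (z $ j) ^ d)"

definition Pmon :: "'n \<Rightarrow> ('n::finite \<Rightarrow> nat) \<Rightarrow> complex^'n \<Rightarrow> complex^'n" where
  "Pmon k I z = (\<chi> i. if i = k then (\<Prod>j\<in>UNIV. (z $ j) ^ (I j)) else 0)"

definition periodic_point :: "('a \<Rightarrow> 'a) \<Rightarrow> nat \<Rightarrow> 'a \<Rightarrow> bool" where
  "periodic_point f p w \<longleftrightarrow> p \<ge> 1 \<and> (f ^^ p) w = w \<and> (\<forall>q. 0 < q \<and> q < p \<longrightarrow> (f ^^ q) w \<noteq> w)"

definition jac_diag :: "(complex^'n \<Rightarrow> complex^'n) \<Rightarrow> 'n \<Rightarrow> complex^'n \<Rightarrow> complex" where
  "jac_diag H k w = deriv (\<lambda>s. H (w + (\<chi> i. if i = k then s else 0)) $ k) 0"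

end

theory Submission
  imports Defs
begin

text \<open>Off the k-th coordinate the perturbed map F_0 + t P_{k,I} is still z_j |-> z_j^d, so along
  the continued periodic point w(t) these coordinates stay equal to those of w_0: they are
  isolated solutions of z^(d^p) = z. The k-th coordinate then follows the one-variable recursion
  x |-> x^d + t x^i u_m (with i = i_k and u_m the remaining factors of z^I at F_0^m(w_0)), and
  rho_k is the x-derivative of its p-th iterate. Writing the iterate and its derivative in
  Caratheodory form at (0, w_k) lets us differentiate the implicitly defined x(t) and then the
  multiplier along it; with W_l = w_k^(d^l) the derivative is
  d^(p-1) (i - d) sum_{l<p} W_l^i u_l / W_(l+1). Multiplied by w_k^(d^(p-1)) and reduced with
  w_k^(d^p) = w_k, each term becomes a single monomial of w_0; these monomials make up Q_{k,I}.
  Since all entries of I are below d, the exponent vector of such a monomial determines both the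
  term l and the multi-index I.\<close>

section \<open>Continuous solutions of \<open>z\<^sup>D = z\<close>\<close>

lemma continuous_finite_range_locally_constant:
  fixes f :: "'a::t2_space \<Rightarrow> 'b::t1_space"
  assumes "finite S" and "isCont f x" and "eventually (\<lambda>t. f t \<in> S) (nhds x)"
  shows "eventually (\<lambda>t. f t = f x) (nhds x)"
proof -
  have "(f \<longlongrightarrow> f x) (nhds x)"
    using assms(2) by (simp add: isCont_def tendsto_at_iff_tendsto_nhds)
  moreover have "open (- (S - {f x}))"
    using assms(1) by (intro open_Compl finite_imp_closed) simp
  ultimately have "eventually (\<lambda>t. f t \<in> - (S - {f x})) (nhds x)"
    by (rule topological_tendstoD) simp
  with assms(3) show ?thesis
    by eventually_elim auto
qed

lemma power_fixed_locally_constant: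
  fixes f :: "complex \<Rightarrow> complex"
  assumes "D \<ge> 2" and "isCont f x" and "f x \<noteq> 0"
    and "eventually (\<lambda>t. f t ^ D = f t) (nhds x)"
  shows "eventually (\<lambda>t. f t = f x) (nhds x)"
proof (rule continuous_finite_range_locally_constant)
  have "z ^ (D - 1) = 1" if "z ^ D = z" and "z \<noteq> 0" for z :: complex
  proof -
    have "z ^ (D - 1) * z = z ^ D"
      using \<open>D \<ge> 2\<close> by (intro power_minus_mult) simp
    also have "\<dots> = 1 * z"
      using that by simp
    finally show ?thesis
      using \<open>z \<noteq> 0\<close> by simp
  qed
  then have "{z::complex. z ^ D = z} \<subseteq> insert 0 {z. z ^ (D - 1) = 1}"
    by blast
  moreover have "finite {z::complex. z ^ (D - 1) = 1}"
    using \<open>D \<ge> 2\<close> by (intro finite_roots_unity) simp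
  ultimately show "finite {z::complex. z ^ D = z}"
    by (rule finite_subset[OF _ finite_insert[THEN iffD2]])
qed (use assms in auto)

section \<open>Caratheodory differentiability in two variables\<close>

text \<open>Unlike has_derivative, this form lets one solve for the slope of an implicitly given curve
  that is only known to be continuous, see caratheodory_diff_implicit_curve.\<close>

definition caratheodory_diff ::
    "(complex \<times> complex \<Rightarrow> complex) \<Rightarrow> complex \<times> complex \<Rightarrow> complex \<Rightarrow> complex \<Rightarrow> bool" where
  "caratheodory_diff f z0 a b \<longleftrightarrow> (\<exists>A B.
      (\<forall>z. f z = f z0 + (fst z - fst z0) * A z + (snd z - snd z0) * B z)
      \<and> isCont A z0 \<and> isCont B z0 \<and> A z0 = a \<and> B z0 = b)"

lemma caratheodory_diff_cong:
  "caratheodory_diff f z0 a b \<Longrightarrow> a = a' \<Longrightarrow> b = b' \<Longrightarrow> caratheodory_diff f z0 a' b'"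
  by simp

lemma caratheodory_diff_const: "caratheodory_diff (\<lambda>z. c) z0 0 0"
  unfolding caratheodory_diff_def by (intro exI[of _ "\<lambda>_. 0"]) simp

lemma caratheodory_diff_fst: "caratheodory_diff fst z0 1 0"
  unfolding caratheodory_diff_def by (intro exI[of _ "\<lambda>_. 1"] exI[of _ "\<lambda>_. 0"]) simp

lemma caratheodory_diff_snd: "caratheodory_diff snd z0 0 1"
  unfolding caratheodory_diff_def by (intro exI[of _ "\<lambda>_. 0"] exI[of _ "\<lambda>_. 1"]) simp

lemma caratheodory_diff_imp_isCont:
  assumes "caratheodory_diff f z0 a b"
  shows "isCont f z0"
proof -
  obtain A B where f: "\<And>z. f z = f z0 + (fst z - fst z0) * A z + (snd z - snd z0) * B z"
    and "isCont A z0" "isCont B z0"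
    using assms unfolding caratheodory_diff_def by blast
  then have "isCont (\<lambda>z. f z0 + (fst z - fst z0) * A z + (snd z - snd z0) * B z) z0"
    by (intro continuous_intros)
  then show ?thesis
    by (subst (asm) f[symmetric])
qed

lemma caratheodory_diff_add:
  assumes "caratheodory_diff f z0 a b" and "caratheodory_diff g z0 a' b'"
  shows "caratheodory_diff (\<lambda>z. f z + g z) z0 (a + a') (b + b')"
proof -
  obtain A B where f: "\<And>z. f z = f z0 + (fst z - fst z0) * A z + (snd z - snd z0) * B z"
    and A: "isCont A z0" "A z0 = a" and B: "isCont B z0" "B z0 = b"
    using assms(1) unfolding caratheodory_diff_def by blast
  obtain A' B' where g: "\<And>z. g z = g z0 + (fst z - fst z0) * A' z + (snd z - snd z0) * B' z"
    and A': "isCont A' z0" "A' z0 = a'" and B': "isCont B' z0" "B' z0 = b'"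
    using assms(2) unfolding caratheodory_diff_def by blast
  have eq: "f z + g z = (f z0 + g z0) + (fst z - fst z0) * (A z + A' z)
      + (snd z - snd z0) * (B z + B' z)" for z
    by (subst f, subst g) (simp add: algebra_simps)
  have "isCont (\<lambda>z. A z + A' z) z0" "isCont (\<lambda>z. B z + B' z) z0"
    using A A' B B' by (auto intro: continuous_intros)
  then show ?thesis
    unfolding caratheodory_diff_def
    by (intro exI[of _ "\<lambda>z. A z + A' z"] exI[of _ "\<lambda>z. B z + B' z"] conjI allI eq)
      (simp_all add: A(2) A'(2) B(2) B'(2))
qed

lemma caratheodory_diff_mult:
  assumes "caratheodory_diff f z0 a b" and "caratheodory_diff g z0 a' b'"
  shows "caratheodory_diff (\<lambda>z. f z * g z) z0 (a * g z0 + f z0 * a') (b * g z0 + f z0 * b')"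
proof -
  obtain A B where f: "\<And>z. f z = f z0 + (fst z - fst z0) * A z + (snd z - snd z0) * B z"
    and A: "isCont A z0" "A z0 = a" and B: "isCont B z0" "B z0 = b"
    using assms(1) unfolding caratheodory_diff_def by blast
  obtain A' B' where g: "\<And>z. g z = g z0 + (fst z - fst z0) * A' z + (snd z - snd z0) * B' z"
    and A': "isCont A' z0" "A' z0 = a'" and B': "isCont B' z0" "B' z0 = b'"
    using assms(2) unfolding caratheodory_diff_def by blast
  have eq: "f z * g z = f z0 * g z0 + (fst z - fst z0) * (A z * g z + f z0 * A' z)
      + (snd z - snd z0) * (B z * g z + f z0 * B' z)" for z
  proof -
    have "f z * g z = f z0 * g z + (fst z - fst z0) * A z * g z + (snd z - snd z0) * B z * g z"
      by (subst f) (simp add: algebra_simps)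
    also have "f z0 * g z = f z0 * (g z0 + (fst z - fst z0) * A' z + (snd z - snd z0) * B' z)"
      by (subst g) simp
    finally show ?thesis
      by (simp add: algebra_simps)
  qed
  have "isCont g z0"
    using assms(2) by (rule caratheodory_diff_imp_isCont)
  then have "isCont (\<lambda>z. A z * g z + f z0 * A' z) z0" "isCont (\<lambda>z. B z * g z + f z0 * B' z) z0"
    using A A' B B' by (auto intro: continuous_intros)
  then show ?thesis
    unfolding caratheodory_diff_def
    by (intro exI[of _ "\<lambda>z. A z * g z + f z0 * A' z"] exI[of _ "\<lambda>z. B z * g z + f z0 * B' z"] conjI allI eq)
      (simp_all add: A(2) A'(2) B(2) B'(2))
qed

lemma caratheodory_diff_power:
  assumes "caratheodory_diff f z0 a b" and "f z0 \<noteq> 0"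
  shows "caratheodory_diff (\<lambda>z. f z ^ n) z0 (of_nat n * f z0 ^ n / f z0 * a) (of_nat n * f z0 ^ n / f z0 * b)"
proof (induction n)
  case 0
  then show ?case
    using caratheodory_diff_const by simp
next
  case (Suc n)
  then show ?case
    unfolding power_Suc using \<open>f z0 \<noteq> 0\<close>
    by (intro caratheodory_diff_cong[OF caratheodory_diff_mult[OF assms(1) Suc]]) (simp_all add: field_simps)
qed

lemma caratheodory_diff_implicit_curve:
  assumes P: "caratheodory_diff P (0, w) a b" and "b \<noteq> 1"
    and "isCont x 0" and "x 0 = w" and fixed: "eventually (\<lambda>t. P (t, x t) = x t) (nhds 0)"
  shows "(x has_field_derivative a / (1 - b)) (at 0)"
proof -
  obtain A B where P_eq: "\<And>z. P z = P (0, w) + fst z * A z + (snd z - w) * B z"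
    and "isCont A (0, w)" "isCont B (0, w)" "A (0, w) = a" "B (0, w) = b"
    using P unfolding caratheodory_diff_def fst_conv snd_conv diff_zero by blast
  have "P (0, w) = w"
    using eventually_nhds_x_imp_x[OF fixed] \<open>x 0 = w\<close> by simp
  have curve: "isCont (\<lambda>t. (t, x t)) 0"
    using \<open>isCont x 0\<close> by (intro continuous_intros) auto
  have cont: "isCont (\<lambda>t. A (t, x t)) 0" "isCont (\<lambda>t. B (t, x t)) 0"
    using \<open>isCont A (0, w)\<close> \<open>isCont B (0, w)\<close> \<open>x 0 = w\<close>
    by (auto intro: continuous_at_compose[OF curve, unfolded o_def])
  then have "eventually (\<lambda>t. B (t, x t) \<noteq> 1) (at 0)"
    using \<open>B (0, w) = b\<close> \<open>x 0 = w\<close> \<open>b \<noteq> 1\<close>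
    by (intro tendsto_imp_eventually_ne) (auto simp: isCont_def)
  moreover have "eventually (\<lambda>t. P (t, x t) = x t \<and> t \<noteq> 0) (at 0)"
    using fixed by (auto simp: eventually_at_filter elim: eventually_mono)
  ultimately have "eventually (\<lambda>t. A (t, x t) / (1 - B (t, x t)) = (x t - x 0) / (t - 0)) (at 0)"
  proof eventually_elim
    case (elim t)
    then have "(x t - w) * (1 - B (t, x t)) = t * A (t, x t)"
      using P_eq[of "(t, x t)"] \<open>P (0, w) = w\<close> by (simp add: algebra_simps)
    then show ?case
      using elim \<open>x 0 = w\<close> by (simp add: field_simps)
  qed
  moreover have "((\<lambda>t. A (t, x t) / (1 - B (t, x t))) \<longlongrightarrow> a / (1 - b)) (at 0)"
    using cont \<open>A (0, w) = a\<close> \<open>B (0, w) = b\<close> \<open>x 0 = w\<close> \<open>b \<noteq> 1\<close>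
    by (intro tendsto_intros) (auto simp: isCont_def)
  ultimately show ?thesis
    unfolding has_field_derivative_iff by (rule Lim_transform_eventually[rotated])
qed

lemma caratheodory_diff_chain_curve:
  assumes J: "caratheodory_diff J (0, w) a b" and x: "(x has_field_derivative x') (at 0)" and "x 0 = w"
  shows "((\<lambda>t. J (t, x t)) has_field_derivative a + b * x') (at 0)"
proof -
  obtain A B where J_eq: "\<And>z. J z = J (0, w) + fst z * A z + (snd z - w) * B z"
    and "isCont A (0, w)" "isCont B (0, w)" "A (0, w) = a" "B (0, w) = b"
    using J unfolding caratheodory_diff_def fst_conv snd_conv diff_zero by blast
  obtain g where g: "\<And>t. x t - x 0 = g t * (t - 0)" and "isCont g 0" "g 0 = x'"
    using x unfolding CARAT_DERIV by blast
  have curve: "isCont (\<lambda>t. (t, x t)) 0"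
    using x by (intro continuous_intros DERIV_isCont) auto
  have "isCont (\<lambda>t. A (t, x t)) 0" "isCont (\<lambda>t. B (t, x t)) 0"
    using \<open>isCont A (0, w)\<close> \<open>isCont B (0, w)\<close> \<open>x 0 = w\<close>
    by (auto intro: continuous_at_compose[OF curve, unfolded o_def])
  then have "isCont (\<lambda>t. A (t, x t) + g t * B (t, x t)) 0"
    using \<open>isCont g 0\<close> by (intro continuous_intros)
  moreover have "J (t, x t) - J (0, x 0) = (A (t, x t) + g t * B (t, x t)) * (t - 0)" for t
    using J_eq[of "(t, x t)"] g[of t] \<open>x 0 = w\<close> by (simp add: algebra_simps)
  ultimately show ?thesis
    unfolding CARAT_DERIV using \<open>A (0, w) = a\<close> \<open>B (0, w) = b\<close> \<open>g 0 = x'\<close> \<open>x 0 = w\<close>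
    by (intro exI[of _ "\<lambda>t. A (t, x t) + g t * B (t, x t)"]) (simp add: mult.commute)
qed

section \<open>The perturbed recursion in the k-th coordinate\<close>

fun korbit :: "nat \<Rightarrow> nat \<Rightarrow> (nat \<Rightarrow> complex) \<Rightarrow> nat \<Rightarrow> complex \<times> complex \<Rightarrow> complex" where
  "korbit d i u 0 z = snd z"
| "korbit d i u (Suc m) z = korbit d i u m z ^ d + fst z * korbit d i u m z ^ i * u m"

fun kmultiplier :: "nat \<Rightarrow> nat \<Rightarrow> (nat \<Rightarrow> complex) \<Rightarrow> nat \<Rightarrow> complex \<times> complex \<Rightarrow> complex" where
  "kmultiplier d i u 0 z = 1"
| "kmultiplier d i u (Suc m) z = (of_nat d * korbit d i u m z ^ (d - 1)
      + fst z * of_nat i * korbit d i u m z ^ (i - 1) * u m) * kmultiplier d i u m z"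

lemma korbit_has_deriv:
  "((\<lambda>x. korbit d i u m (t, x)) has_field_derivative kmultiplier d i u m (t, x)) (at x)"
  by (induction m) (auto intro!: derivative_eq_intros simp: algebra_simps)

lemma power_power_Suc: "(w::'a::monoid_mult) ^ (d * d ^ m) = (w ^ d ^ m) ^ d"
  by (simp only: mult.commute[of d] power_mult)

lemma korbit_unperturbed: "korbit d i u m (0, w) = w ^ d ^ m"
  by (induction m) (simp_all add: power_power_Suc)

definition pert_ratio :: "nat \<Rightarrow> nat \<Rightarrow> (nat \<Rightarrow> complex) \<Rightarrow> complex \<Rightarrow> nat \<Rightarrow> complex" where
  "pert_ratio d i u w l = (w ^ d ^ l) ^ i * u l / w ^ d ^ Suc l"

text \<open>The t-derivatives at (0, w) of korbit and kmultiplier, divided by w^(d^m) and w^(d^m)/w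
  respectively; this normalisation removes all powers of w from their recursions.\<close>

primrec korbit_dt :: "nat \<Rightarrow> nat \<Rightarrow> (nat \<Rightarrow> complex) \<Rightarrow> complex \<Rightarrow> nat \<Rightarrow> complex" where
  "korbit_dt d i u w 0 = 0"
| "korbit_dt d i u w (Suc m) = of_nat d * korbit_dt d i u w m + pert_ratio d i u w m"

primrec kmultiplier_dt :: "nat \<Rightarrow> nat \<Rightarrow> (nat \<Rightarrow> complex) \<Rightarrow> complex \<Rightarrow> nat \<Rightarrow> complex" where
  "kmultiplier_dt d i u w 0 = 0"
| "kmultiplier_dt d i u w (Suc m) = of_nat d ^ Suc m * (of_nat d - 1) * korbit_dt d i u w m
     + of_nat i * of_nat d ^ m * pert_ratio d i u w m + of_nat d * kmultiplier_dt d i u w m"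

lemma caratheodory_diff_korbit:
  assumes "w \<noteq> 0"
  shows "caratheodory_diff (korbit d i u m) (0, w)
    (w ^ d ^ m * korbit_dt d i u w m) (of_nat d ^ m * w ^ d ^ m / w)"
proof (induction m)
  case 0
  show ?case
    using caratheodory_diff_snd[of "(0, w)"] assms by (simp add: fun_eq_iff)
next
  case (Suc m)
  define W where "W = w ^ d ^ m"
  have W: "W \<noteq> 0" "korbit d i u m (0, w) = W"
    using assms by (simp_all add: W_def korbit_unperturbed)
  have "korbit d i u (Suc m) = (\<lambda>z. korbit d i u m z ^ d + fst z * korbit d i u m z ^ i * u m)"
    by (rule ext) simp
  then show ?case
    using W by (simp only:)
      (intro caratheodory_diff_cong[OF caratheodory_diff_add[OF caratheodory_diff_power[OF Suc]
      caratheodory_diff_mult[OF caratheodory_diff_mult[OF caratheodory_diff_fst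
          caratheodory_diff_power[OF Suc]] caratheodory_diff_const]]],
      simp_all add: W_def[symmetric] pert_ratio_def power_power_Suc field_simps)
qed

lemma kmultiplier_unperturbed:
  assumes "w \<noteq> 0" and "d \<ge> 1"
  shows "kmultiplier d i u m (0, w) = of_nat d ^ m * w ^ d ^ m / w"
proof (induction m)
  case (Suc m)
  have "(w ^ d ^ m) ^ (d - 1) = (w ^ d ^ m) ^ d / w ^ d ^ m"
    using assms by (simp add: power_diff)
  with Suc show ?case
    using assms by (simp add: korbit_unperturbed power_power_Suc)
qed (use assms in simp)

lemma caratheodory_diff_kmultiplier:
  assumes "w \<noteq> 0" and "d \<ge> 1"
  shows "caratheodory_diff (kmultiplier d i u m) (0, w)
    (w ^ d ^ m * kmultiplier_dt d i u w m / w) (of_nat d ^ m * (of_nat d ^ m - 1) * w ^ d ^ m / w\<^sup>2)"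
proof (induction m)
  case 0
  show ?case
    using caratheodory_diff_const[of 1 "(0, w)"] by (simp add: fun_eq_iff)
next
  case (Suc m)
  define W where "W = w ^ d ^ m"
  have W: "W \<noteq> 0" "korbit d i u m (0, w) = W" "kmultiplier d i u m (0, w) = of_nat d ^ m * W / w"
    using assms by (simp_all add: W_def korbit_unperturbed kmultiplier_unperturbed)
  have pow_d: "W ^ (d - Suc 0) = W ^ d / W"
    using assms W by (simp add: power_diff)
  have pow_i: "W ^ (i - Suc 0) = (if i = 0 then 1 else W ^ i / W)"
    using W by (simp add: power_diff)
  have of_nat_d: "of_nat (d - Suc 0) = (of_nat d - 1 :: complex)"
    using assms by (simp add: of_nat_diff)
  have K: "caratheodory_diff (korbit d i u m) (0, w) (W * korbit_dt d i u w m) (of_nat d ^ m * W / w)"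
    using caratheodory_diff_korbit[OF assms(1)] unfolding W_def .
  have "kmultiplier d i u (Suc m) = (\<lambda>z. (of_nat d * korbit d i u m z ^ (d - 1)
      + fst z * of_nat i * korbit d i u m z ^ (i - 1) * u m) * kmultiplier d i u m z)"
    by (rule ext) simp
  then show ?case
    by (simp only:)
      (intro caratheodory_diff_cong[OF caratheodory_diff_mult[OF caratheodory_diff_add[OF
        caratheodory_diff_mult[OF caratheodory_diff_const caratheodory_diff_power[OF K]]
        caratheodory_diff_mult[OF caratheodory_diff_mult[OF caratheodory_diff_mult[OF
          caratheodory_diff_fst caratheodory_diff_const] caratheodory_diff_power[OF K]] caratheodory_diff_const]] Suc]];
      simp add: W pow_d pow_i of_nat_d W_def[symmetric] pert_ratio_def power_power_Suc
        power2_eq_square assms(1) field_simps; simp add: algebra_simps)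
qed

lemma kmultiplier_dt_minus_korbit_dt:
  "kmultiplier_dt d i u w m - of_nat d ^ m * korbit_dt d i u w m
    = (of_nat i - of_nat d) * of_nat d ^ (m - 1) * (\<Sum>l<m. pert_ratio d i u w l)"
proof (induction m)
  case (Suc m)
  have "kmultiplier_dt d i u w (Suc m) - of_nat d ^ Suc m * korbit_dt d i u w (Suc m)
      = of_nat d * (kmultiplier_dt d i u w m - of_nat d ^ m * korbit_dt d i u w m)
        + (of_nat i - of_nat d) * of_nat d ^ m * pert_ratio d i u w m"
    by (simp add: algebra_simps)
  also have "\<dots> = (of_nat i - of_nat d) * of_nat d ^ m * (\<Sum>l<Suc m. pert_ratio d i u w l)"
    unfolding Suc.IH by (cases m) (simp_all add: algebra_simps)
  finally show ?case
    by simp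
qed simp

lemma kmultiplier_along_fixed_curve_has_deriv:
  assumes "w \<noteq> 0" and "d \<ge> 2" and "p \<ge> 1" and periodic: "w ^ d ^ p = w"
    and "isCont x 0" and "x 0 = w" and fixed: "eventually (\<lambda>t. korbit d i u p (t, x t) = x t) (nhds 0)"
  shows "((\<lambda>t. kmultiplier d i u p (t, x t)) has_field_derivative
    (of_nat i - of_nat d) * of_nat d ^ (p - 1) * (\<Sum>l<p. pert_ratio d i u w l)) (at 0)"
proof -
  have "d \<le> d ^ p"
    using assms by (simp add: self_le_power)
  then have "d ^ p \<noteq> 1"
    using \<open>d \<ge> 2\<close> by linarith
  then have "(of_nat d ^ p :: complex) \<noteq> 1"
    by (metis of_nat_eq_1_iff of_nat_power)
  have P: "caratheodory_diff (korbit d i u p) (0, w) (w * korbit_dt d i u w p) (of_nat d ^ p)"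
    using caratheodory_diff_korbit[OF \<open>w \<noteq> 0\<close>, of d i u p] assms by (simp add: periodic)
  have J: "caratheodory_diff (kmultiplier d i u p) (0, w)
      (kmultiplier_dt d i u w p) (of_nat d ^ p * (of_nat d ^ p - 1) / w)"
    using caratheodory_diff_kmultiplier[OF \<open>w \<noteq> 0\<close>, of d i u p] assms
    by (simp add: periodic power2_eq_square)
  have "(x has_field_derivative w * korbit_dt d i u w p / (1 - of_nat d ^ p)) (at 0)"
    using P \<open>of_nat d ^ p \<noteq> 1\<close> assms(5,6) fixed by (rule caratheodory_diff_implicit_curve)
  from caratheodory_diff_chain_curve[OF J this \<open>x 0 = w\<close>]
  have "((\<lambda>t. kmultiplier d i u p (t, x t)) has_field_derivative
      kmultiplier_dt d i u w p - of_nat d ^ p * korbit_dt d i u w p) (at 0)"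
  proof (rule DERIV_cong)
    have "1 - of_nat d ^ p \<noteq> (0::complex)"
      using \<open>of_nat d ^ p \<noteq> 1\<close> by simp
    then show "kmultiplier_dt d i u w p + of_nat d ^ p * (of_nat d ^ p - 1) / w
        * (w * korbit_dt d i u w p / (1 - of_nat d ^ p))
      = kmultiplier_dt d i u w p - of_nat d ^ p * korbit_dt d i u w p"
      using \<open>w \<noteq> 0\<close> by (simp add: field_simps)
  qed
  then show ?thesis
    by (simp add: kmultiplier_dt_minus_korbit_dt)
qed

section \<open>Reduction to one variable\<close>

definition F_pert :: "nat \<Rightarrow> 'n::finite \<Rightarrow> ('n \<Rightarrow> nat) \<Rightarrow> complex \<Rightarrow> complex^'n \<Rightarrow> complex^'n" where
  "F_pert d k I t = (\<lambda>z. F0 d z + t *s Pmon k I z)"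

lemma F_pert_nth:
  "F_pert d k I t z $ j = (z $ j) ^ d + (if j = k then t * (\<Prod>i\<in>UNIV. (z $ i) ^ I i) else 0)"
  unfolding F_pert_def F0_def Pmon_def by simp

lemma F0_iter_nth: "(F0 d ^^ m) z $ j = (z $ j) ^ d ^ m"
  by (induction m) (simp_all add: F0_def power_power_Suc)

lemma F_pert_iter_nth_other: "j \<noteq> k \<Longrightarrow> (F_pert d k I t ^^ m) z $ j = (z $ j) ^ d ^ m"
  by (induction m) (simp_all add: F_pert_nth power_power_Suc)

definition monomial_off_k :: "nat \<Rightarrow> 'n::finite \<Rightarrow> ('n \<Rightarrow> nat) \<Rightarrow> complex^'n \<Rightarrow> nat \<Rightarrow> complex" where
  "monomial_off_k d k I w0 l = (\<Prod>j\<in>UNIV - {k}. (w0 $ j) ^ (d ^ l * I j))"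

lemma F_pert_iter_nth_k:
  assumes "\<forall>j. j \<noteq> k \<longrightarrow> z $ j = w0 $ j"
  shows "(F_pert d k I t ^^ m) z $ k = korbit d (I k) (monomial_off_k d k I w0) m (t, z $ k)"
proof (induction m)
  case (Suc m)
  let ?v = "(F_pert d k I t ^^ m) z"
  have "(\<Prod>j\<in>UNIV. (?v $ j) ^ I j) = (?v $ k) ^ I k * (\<Prod>j\<in>UNIV - {k}. (?v $ j) ^ I j)"
    by (rule prod.remove) auto
  also have "(\<Prod>j\<in>UNIV - {k}. (?v $ j) ^ I j) = monomial_off_k d k I w0 m"
    unfolding monomial_off_k_def using assms
    by (intro prod.cong) (auto simp: F_pert_iter_nth_other power_mult)
  finally show ?case
    using Suc by (simp add: F_pert_nth mult.assoc)
qed simp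

lemma jac_diag_F_pert_iter:
  assumes "\<forall>j. j \<noteq> k \<longrightarrow> z $ j = w0 $ j"
  shows "jac_diag (F_pert d k I t ^^ m) k z = kmultiplier d (I k) (monomial_off_k d k I w0) m (t, z $ k)"
proof -
  have "(F_pert d k I t ^^ m) (z + (\<chi> i. if i = k then s else 0)) $ k
      = korbit d (I k) (monomial_off_k d k I w0) m (t, s + z $ k)" for s
  proof -
    have "\<forall>j. j \<noteq> k \<longrightarrow> (z + (\<chi> i. if i = k then s else 0)) $ j = w0 $ j"
      using assms by simp
    from F_pert_iter_nth_k[OF this] show ?thesis
      by (simp add: add.commute)
  qed
  moreover have "((\<lambda>s. korbit d (I k) (monomial_off_k d k I w0) m (t, s + z $ k)) has_field_derivative
      kmultiplier d (I k) (monomial_off_k d k I w0) m (t, z $ k)) (at 0)"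
    using DERIV_shift[THEN iffD1, OF korbit_has_deriv[where x = "0 + z $ k"]] by simp
  ultimately show ?thesis
    unfolding jac_diag_def by (simp add: DERIV_imp_deriv)
qed

lemma F_pert_fixed_curve_off_k:
  assumes "d \<ge> 2" and "p \<ge> 1" and periodic: "(F0 d ^^ p) w0 = w0" and "\<forall>j. w0 $ j \<noteq> 0"
    and "w 0 = w0" and "isCont w 0"
    and fixed: "eventually (\<lambda>t. (F_pert d k I t ^^ p) (w t) = w t) (nhds 0)"
  shows "eventually (\<lambda>t. \<forall>j. j \<noteq> k \<longrightarrow> w t $ j = w0 $ j) (nhds 0)"
proof (rule eventually_all_finite)
  fix j
  have "eventually (\<lambda>t. w t $ j = w0 $ j) (nhds 0)" if "j \<noteq> k"
  proof -
    have "d \<le> d ^ p"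
      using assms by (simp add: self_le_power)
    then have "d ^ p \<ge> 2"
      using \<open>d \<ge> 2\<close> by linarith
    moreover have "eventually (\<lambda>t. (w t $ j) ^ d ^ p = w t $ j) (nhds 0)"
      using fixed by eventually_elim (metis F_pert_iter_nth_other[OF \<open>j \<noteq> k\<close>])
    ultimately have "eventually (\<lambda>t. w t $ j = w 0 $ j) (nhds 0)"
      using assms by (intro power_fixed_locally_constant) auto
    then show ?thesis
      using \<open>w 0 = w0\<close> by simp
  qed
  then show "eventually (\<lambda>t. j \<noteq> k \<longrightarrow> w t $ j = w0 $ j) (nhds 0)"
    by (cases "j = k") simp_all
qed

lemma F_pert_multiplier_has_deriv:
  assumes "d \<ge> 2" and "p \<ge> 1" and "periodic_point (F0 d) p w0" and "\<forall>j. w0 $ j \<noteq> 0"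
    and "w 0 = w0" and "isCont w 0"
    and fixed: "eventually (\<lambda>t. (F_pert d k I t ^^ p) (w t) = w t) (nhds 0)"
  shows "((\<lambda>t. jac_diag (F_pert d k I t ^^ p) k (w t)) has_field_derivative
    (of_nat (I k) - of_nat d) * of_nat d ^ (p - 1)
      * (\<Sum>l<p. pert_ratio d (I k) (monomial_off_k d k I w0) (w0 $ k) l)) (at 0)"
proof -
  define u where "u = monomial_off_k d k I w0"
  have periodic: "(F0 d ^^ p) w0 = w0"
    using assms(3) by (simp add: periodic_point_def)
  have off_k: "eventually (\<lambda>t. \<forall>j. j \<noteq> k \<longrightarrow> w t $ j = w0 $ j) (nhds 0)"
    using assms periodic by (intro F_pert_fixed_curve_off_k) auto
  then have "eventually (\<lambda>t. korbit d (I k) u p (t, w t $ k) = w t $ k) (nhds 0)"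
    using fixed by eventually_elim (metis F_pert_iter_nth_k u_def)
  moreover have "(w0 $ k) ^ d ^ p = w0 $ k"
    using F0_iter_nth[where d = d and m = p and z = w0 and j = k] periodic by simp
  ultimately have "((\<lambda>t. kmultiplier d (I k) u p (t, w t $ k)) has_field_derivative
      (of_nat (I k) - of_nat d) * of_nat d ^ (p - 1) * (\<Sum>l<p. pert_ratio d (I k) u (w0 $ k) l)) (at 0)"
    using assms by (intro kmultiplier_along_fixed_curve_has_deriv) auto
  moreover have "eventually (\<lambda>t. jac_diag (F_pert d k I t ^^ p) k (w t)
      = kmultiplier d (I k) u p (t, w t $ k)) (nhds 0)"
    using off_k by eventually_elim (simp add: jac_diag_F_pert_iter u_def)
  ultimately show ?thesis
    unfolding u_def by (rule DERIV_cong_ev[OF refl _ refl, THEN iffD2, rotated])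
qed

section \<open>The polynomials Q_{k,I}\<close>

text \<open>The l-th term of the sum in kmultiplier_along_fixed_curve_has_deriv has w_k-exponent
  d^l i - d^(l+1); multiplying by w_k^(d^(p-1)) shifts it by d^(p-1), and in the last term
  w_k^(d^p) = w_k reduces it further (to 0 when i = d - 1).\<close>

definition Qexp_k :: "nat \<Rightarrow> nat \<Rightarrow> nat \<Rightarrow> nat \<Rightarrow> nat" where
  "Qexp_k d p i l = (if l < p - 1 then d ^ (p - 1) + d ^ l * i - d ^ Suc l
     else if i = d - 1 then 0 else (i + 1) * d ^ (p - 1) - 1)"

definition Qexp :: "nat \<Rightarrow> nat \<Rightarrow> 'n \<Rightarrow> ('n \<Rightarrow> nat) \<Rightarrow> nat \<Rightarrow> 'n \<Rightarrow> nat" where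
  "Qexp d p k I l = (\<lambda>j. if j = k then Qexp_k d p (I k) l else d ^ l * I j)"

definition Q_poly :: "nat \<Rightarrow> nat \<Rightarrow> 'n \<Rightarrow> ('n \<Rightarrow> nat) \<Rightarrow> ('n \<Rightarrow> nat) \<Rightarrow> complex" where
  "Q_poly d p k I e =
    (if e \<in> Qexp d p k I ` {..<p} then (of_nat (I k) - of_nat d) * of_nat d ^ (p - 1) else 0)"

lemma admissible_le:
  assumes "admissible d (I :: 'n::finite \<Rightarrow> nat)"
  shows "I j \<le> d - 1"
proof -
  have "I j \<le> (\<Sum>j\<in>UNIV. I j)"
    by (rule member_le_sum) auto
  moreover have "(\<Sum>j\<in>UNIV. I j) \<le> d" and "I j \<noteq> d"
    using assms unfolding admissible_def by auto
  ultimately show ?thesis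
    by arith
qed

lemma Qexp_k_lt:
  assumes "l < p - 1" and "i \<le> d" and "d \<ge> 1"
  shows "Qexp_k d p i l + d ^ l * (d - i) = d ^ (p - 1)"
proof -
  have "d ^ Suc l \<le> d ^ (p - 1)"
    using assms by (intro power_increasing) auto
  moreover have "d ^ Suc l = d ^ l * i + d ^ l * (d - i)"
    using assms(2) by (simp flip: add_mult_distrib2)
  ultimately show ?thesis
    using assms(1) unfolding Qexp_k_def by simp
qed

lemma Qexp_k_lt_bounds:
  assumes "l < p - 1" and "i \<le> d - 1" and "d \<ge> 2"
  shows "Qexp_k d p i l \<le> d ^ (p - 1) - 1" and "1 \<le> i \<Longrightarrow> 1 \<le> Qexp_k d p i l"
proof -
  have sum: "Qexp_k d p i l + d ^ l * (d - i) = d ^ (p - 1)"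
    using assms by (intro Qexp_k_lt) auto
  have "d ^ l * (d - i) \<ge> 1"
    using assms by simp
  with sum show "Qexp_k d p i l \<le> d ^ (p - 1) - 1"
    by linarith
  assume "1 \<le> i"
  have "d ^ l * (d - i) < d ^ Suc l"
    using assms \<open>1 \<le> i\<close> by simp
  also have "\<dots> \<le> d ^ (p - 1)"
    using assms by (intro power_increasing) auto
  finally show "1 \<le> Qexp_k d p i l"
    using sum by linarith
qed

lemma Qexp_k_last: "Qexp_k d p i (p - 1) = (if i = d - 1 then 0 else (i + 1) * d ^ (p - 1) - 1)"
  unfolding Qexp_k_def by simp

lemma Qexp_k_last_cases:
  assumes "1 \<le> i" and "d \<ge> 1"
  shows "Qexp_k d p i (p - 1) = 0 \<or> d ^ (p - 1) \<le> Qexp_k d p i (p - 1)"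
proof -
  have "1 \<le> d ^ (p - 1)" and "d ^ (p - 1) \<le> i * d ^ (p - 1)"
    using assms by simp_all
  moreover have "(i + 1) * d ^ (p - 1) = i * d ^ (p - 1) + d ^ (p - 1)"
    by simp
  ultimately have "d ^ (p - 1) \<le> (i + 1) * d ^ (p - 1) - 1"
    by linarith
  then show ?thesis
    unfolding Qexp_k_last by simp
qed

lemma Qexp_k_last_inj:
  assumes eq: "Qexp_k d p i (p - 1) = Qexp_k d p i' (p - 1)" and "i \<le> d - 1" and "i' \<le> d - 1"
    and "d \<ge> 2" and "p \<ge> 2"
  shows "i = i'"
proof -
  have "d \<le> d ^ (p - 1)"
    using assms by (simp add: self_le_power)
  moreover have "d ^ (p - 1) \<le> (j + 1) * d ^ (p - 1)" for j
    by simp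
  ultimately have pos: "2 \<le> (j + 1) * d ^ (p - 1)" for j
    using \<open>d \<ge> 2\<close> by (meson le_trans)
  show ?thesis
  proof (cases "i = d - 1 \<or> i' = d - 1")
    case True
    then show ?thesis
      using eq pos[of i] pos[of i'] unfolding Qexp_k_last by (auto split: if_splits)
  next
    case False
    then have "i \<noteq> d - 1" and "i' \<noteq> d - 1"
      by simp_all
    then have "(i + 1) * d ^ (p - 1) - 1 = (i' + 1) * d ^ (p - 1) - 1"
      using eq unfolding Qexp_k_last by (simp only: if_False)
    then have "(i + 1) * d ^ (p - 1) = (i' + 1) * d ^ (p - 1)"
      using pos[of i] pos[of i'] by linarith
    then show ?thesis
      using \<open>d \<ge> 2\<close> by simp
  qed
qed

lemma power_mult_eq_imp_zero:
  fixes d :: nat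
  assumes "d \<ge> 2" and "l < l'" and eq: "d ^ l * x = d ^ l' * y" and "x < d"
  shows "x = 0 \<and> y = 0"
proof -
  have "d ^ l' = d ^ l * d ^ (l' - l)"
    using \<open>l < l'\<close> by (simp flip: power_add)
  with eq have x: "x = d ^ (l' - l) * y"
    using \<open>d \<ge> 2\<close> by simp
  have "d \<le> d ^ (l' - l)"
    using assms by (simp add: self_le_power)
  have "y = 0"
  proof (rule ccontr)
    assume "y \<noteq> 0"
    then have "d ^ (l' - l) \<le> x"
      unfolding x by simp
    with \<open>d \<le> d ^ (l' - l)\<close> \<open>x < d\<close> show False
      by linarith
  qed
  with x show ?thesis
    by simp
qed

lemma admissible_off_k_zero_imp_pos:
  assumes "admissible d I" and "\<And>j. j \<noteq> k \<Longrightarrow> I j = 0"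
  shows "1 \<le> I k"
proof (rule ccontr)
  assume "\<not> 1 \<le> I k"
  then have "I = (\<lambda>_. 0)"
    using assms(2) by (metis less_one not_le)
  then show False
    using assms(1) unfolding admissible_def by simp
qed

lemma Qexp_eq_imp_same_level:
  fixes I I' :: "'n::finite \<Rightarrow> nat"
  assumes "d \<ge> 2" and "admissible d I" and "admissible d I'" and "l < l'" and "l' < p"
    and eq: "Qexp d p k I l = Qexp d p k I' l'"
  shows False
proof -
  have le: "I j \<le> d - 1" "I' j \<le> d - 1" for j
    using assms admissible_le by blast+
  have off_k: "I j = 0 \<and> I' j = 0" if "j \<noteq> k" for j
  proof (rule power_mult_eq_imp_zero)
    show "d ^ l * I j = d ^ l' * I' j"
      using fun_cong[OF eq, of j] that unfolding Qexp_def by simp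
  qed (use assms le[of j] in auto)
  have "1 \<le> I k" and "1 \<le> I' k"
    using admissible_off_k_zero_imp_pos[of d I k] admissible_off_k_zero_imp_pos[of d I' k] off_k assms
    by blast+
  have kk: "Qexp_k d p (I k) l = Qexp_k d p (I' k) l'"
    using fun_cong[OF eq, of k] unfolding Qexp_def by simp
  have "l < p - 1"
    using assms by linarith
  then have range: "1 \<le> Qexp_k d p (I k) l" "Qexp_k d p (I k) l \<le> d ^ (p - 1) - 1"
    using Qexp_k_lt_bounds[OF _ le(1)] assms \<open>1 \<le> I k\<close> by auto
  have "l' < p - 1"
  proof (rule ccontr)
    assume "\<not> l' < p - 1"
    then have "l' = p - 1"
      using assms by linarith
    then have "Qexp_k d p (I k) l = 0 \<or> d ^ (p - 1) \<le> Qexp_k d p (I k) l"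
      using Qexp_k_last_cases[OF \<open>1 \<le> I' k\<close>] kk assms by simp
    then show False
      using range by linarith
  qed
  have "Qexp_k d p (I k) l + d ^ l * (d - I k) = d ^ (p - 1)"
    using Qexp_k_lt[OF \<open>l < p - 1\<close>, of "I k"] le(1)[of k] assms by simp
  moreover have "Qexp_k d p (I' k) l' + d ^ l' * (d - I' k) = d ^ (p - 1)"
    using Qexp_k_lt[OF \<open>l' < p - 1\<close>, of "I' k"] le(2)[of k] assms by simp
  ultimately have "d ^ l * (d - I k) = d ^ l' * (d - I' k)"
    using kk by linarith
  moreover have "d - I k < d"
    using \<open>1 \<le> I k\<close> \<open>d \<ge> 2\<close> by linarith
  ultimately have "d - I k = 0"
    using power_mult_eq_imp_zero[OF \<open>d \<ge> 2\<close> \<open>l < l'\<close>] by blast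
  then show False
    using le(1)[of k] \<open>d \<ge> 2\<close> by linarith
qed

lemma Qexp_eq_imp_eq:
  fixes I I' :: "'n::finite \<Rightarrow> nat"
  assumes "d \<ge> 2" and "p \<ge> 2" and "admissible d I" and "admissible d I'" and "l < p" and "l' < p"
    and eq: "Qexp d p k I l = Qexp d p k I' l'"
  shows "l = l' \<and> I = I'"
proof -
  have "l = l'"
    using Qexp_eq_imp_same_level[OF \<open>d \<ge> 2\<close> \<open>admissible d I\<close> \<open>admissible d I'\<close> _ \<open>l' < p\<close> eq]
      Qexp_eq_imp_same_level[OF \<open>d \<ge> 2\<close> \<open>admissible d I'\<close> \<open>admissible d I\<close> _ \<open>l < p\<close> eq[symmetric]]
    by (cases l l' rule: linorder_cases) auto
  have le: "I j \<le> d - 1" "I' j \<le> d - 1" for j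
    using assms admissible_le by blast+
  have kk: "Qexp_k d p (I k) l = Qexp_k d p (I' k) l"
    using fun_cong[OF eq, of k] \<open>l = l'\<close> unfolding Qexp_def by simp
  have "I j = I' j" if "j \<noteq> k" for j
    using fun_cong[OF eq, of j] that \<open>l = l'\<close> \<open>d \<ge> 2\<close> unfolding Qexp_def by simp
  moreover have "I k = I' k"
  proof (cases "l < p - 1")
    case True
    have "Qexp_k d p (I k) l + d ^ l * (d - I k) = d ^ (p - 1)"
      using Qexp_k_lt[OF True, of "I k"] le(1)[of k] assms by simp
    moreover have "Qexp_k d p (I' k) l + d ^ l * (d - I' k) = d ^ (p - 1)"
      using Qexp_k_lt[OF True, of "I' k"] le(2)[of k] assms by simp
    ultimately have "d ^ l * (d - I k) = d ^ l * (d - I' k)"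
      using kk by linarith
    then have "d - I k = d - I' k"
      using \<open>d \<ge> 2\<close> by simp
    then show ?thesis
      using le[of k] \<open>d \<ge> 2\<close> by linarith
  next
    case False
    then have "l = p - 1"
      using assms by linarith
    then show ?thesis
      using Qexp_k_last_inj[OF _ le(1,2) \<open>d \<ge> 2\<close> \<open>p \<ge> 2\<close>] kk by simp
  qed
  ultimately have "I = I'"
    by (metis ext)
  with \<open>l = l'\<close> show ?thesis
    by simp
qed

lemma inj_on_Qexp:
  fixes I :: "'n::finite \<Rightarrow> nat"
  assumes "d \<ge> 2" and "admissible d I"
  shows "inj_on (Qexp d p k I) {..<p}"
proof (cases "p \<ge> 2")
  case True
  then show ?thesis
    using Qexp_eq_imp_eq[OF \<open>d \<ge> 2\<close> True \<open>admissible d I\<close> \<open>admissible d I\<close>] by (auto intro: inj_onI)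
next
  case False
  then have "{..<p} \<subseteq> {0}"
    by auto
  then show ?thesis
    by (rule inj_on_subset[rotated]) simp
qed

lemma Q_poly_support:
  fixes I :: "'n::finite \<Rightarrow> nat"
  assumes "d \<ge> 2" and "admissible d I"
  shows "{e. Q_poly d p k I e \<noteq> 0} = Qexp d p k I ` {..<p}"
proof -
  have "I k \<noteq> d"
    using assms unfolding admissible_def by simp
  then have "(of_nat (I k) - of_nat d) * of_nat d ^ (p - 1) \<noteq> (0::complex)"
    using assms by simp
  then show ?thesis
    unfolding Q_poly_def by auto
qed

lemma is_mpoly_Q_poly:
  fixes I :: "'n::finite \<Rightarrow> nat"
  assumes "d \<ge> 2" and "admissible d I"
  shows "is_mpoly (Q_poly d p k I)"
  unfolding is_mpoly_def Q_poly_support[OF assms] by simp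

lemma mpoly_eval_Q_poly:
  fixes I :: "'n::finite \<Rightarrow> nat"
  assumes "d \<ge> 2" and "admissible d I"
  shows "mpoly_eval (Q_poly d p k I) z = (of_nat (I k) - of_nat d) * of_nat d ^ (p - 1)
    * (\<Sum>l<p. \<Prod>j\<in>UNIV. (z $ j) ^ Qexp d p k I l j)"
proof -
  have "mpoly_eval (Q_poly d p k I) z
      = (\<Sum>e\<in>Qexp d p k I ` {..<p}. Q_poly d p k I e * (\<Prod>j\<in>UNIV. (z $ j) ^ e j))"
    unfolding mpoly_eval_def Q_poly_support[OF assms] ..
  also have "\<dots> = (\<Sum>l<p. Q_poly d p k I (Qexp d p k I l) * (\<Prod>j\<in>UNIV. (z $ j) ^ Qexp d p k I l j))"
    by (rule sum.reindex_cong[OF inj_on_Qexp[OF assms] refl refl])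
  finally show ?thesis
    by (simp add: Q_poly_def sum_distrib_left)
qed

lemma mpoly_deg_in_Q_poly:
  fixes I :: "'n::finite \<Rightarrow> nat"
  assumes "d \<ge> 2" and "admissible d I"
  shows "mpoly_deg_in (Q_poly d p k I) j = Max (insert 0 ((\<lambda>l. Qexp d p k I l j) ` {..<p}))"
proof -
  have "{e j |e. Q_poly d p k I e \<noteq> 0} = (\<lambda>e. e j) ` {e. Q_poly d p k I e \<noteq> 0}"
    by blast
  also have "\<dots> = (\<lambda>l. Qexp d p k I l j) ` {..<p}"
    unfolding Q_poly_support[OF assms] image_image ..
  finally show ?thesis
    unfolding mpoly_deg_in_def by simp
qed

lemma Max_insert_zero_eqI:
  fixes M :: nat
  assumes "finite A" and "\<And>x. x \<in> A \<Longrightarrow> x \<le> M" and "M = 0 \<or> M \<in> A"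
  shows "Max (insert 0 A) = M"
  by (rule Max_eqI) (use assms in auto)

lemma mpoly_deg_in_Q_poly_off_k:
  fixes I :: "'n::finite \<Rightarrow> nat"
  assumes "d \<ge> 2" and "p \<ge> 1" and "admissible d I" and "j \<noteq> k"
  shows "mpoly_deg_in (Q_poly d p k I) j = I j * d ^ (p - 1)"
  unfolding mpoly_deg_in_Q_poly[OF \<open>d \<ge> 2\<close> \<open>admissible d I\<close>]
proof (rule Max_insert_zero_eqI)
  show "x \<le> I j * d ^ (p - 1)" if "x \<in> (\<lambda>l. Qexp d p k I l j) ` {..<p}" for x
    using that \<open>j \<noteq> k\<close> \<open>d \<ge> 2\<close> by (auto simp: Qexp_def mult.commute intro: power_increasing)
  show "I j * d ^ (p - 1) = 0 \<or> I j * d ^ (p - 1) \<in> (\<lambda>l. Qexp d p k I l j) ` {..<p}"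
    using \<open>j \<noteq> k\<close> \<open>p \<ge> 1\<close> by (auto simp: Qexp_def mult.commute intro!: image_eqI[of _ _ "p - 1"])
qed simp

lemma Qexp_k_le_max:
  assumes "l < p" and "i \<le> d - 1" and "d \<ge> 2"
  shows "Qexp_k d p i l \<le> (if i = d - 1 then d ^ (p - 1) - 1 else (i + 1) * d ^ (p - 1) - 1)"
proof (cases "l < p - 1")
  case True
  then have "Qexp_k d p i l \<le> d ^ (p - 1) - 1"
    using Qexp_k_lt_bounds(1)[OF True assms(2,3)] by simp
  moreover have "d ^ (p - 1) \<le> (i + 1) * d ^ (p - 1)"
    by simp
  ultimately show ?thesis
    by auto
next
  case False
  then have "l = p - 1"
    using \<open>l < p\<close> by simp
  then show ?thesis
    using Qexp_k_last by simp
qed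

lemma Qexp_k_max_attained:
  assumes "d \<ge> 2" and "p \<ge> 1"
  obtains l where "l < p" and "Qexp_k d p i l = (if i = d - 1 then d ^ (p - 1) - 1 else (i + 1) * d ^ (p - 1) - 1)"
  | "(if i = d - 1 then d ^ (p - 1) - 1 else (i + 1) * d ^ (p - 1) - 1) = 0"
proof (cases "i = d - 1 \<and> p \<ge> 2")
  case True
  then have "Qexp_k d p i 0 = d ^ (p - 1) - 1"
    using \<open>d \<ge> 2\<close> by (simp add: Qexp_k_def)
  with True that(1)[of 0] show ?thesis
    by simp
next
  case False
  show ?thesis
  proof (cases "i = d - 1")
    case True
    with False \<open>p \<ge> 1\<close> have "p = 1"
      by simp
    with True show ?thesis
      by (intro that(2)) simp
  next
    case False
    then have "Qexp_k d p i (p - 1) = (i + 1) * d ^ (p - 1) - 1"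
      unfolding Qexp_k_last by simp
    with False \<open>p \<ge> 1\<close> show ?thesis
      by (intro that(1)[of "p - 1"]) simp_all
  qed
qed

lemma mpoly_deg_in_Q_poly_k:
  fixes I :: "'n::finite \<Rightarrow> nat"
  assumes "d \<ge> 2" and "p \<ge> 1" and "admissible d I"
  shows "mpoly_deg_in (Q_poly d p k I) k =
    (if I k = d - 1 then d ^ (p - 1) - 1 else (I k + 1) * d ^ (p - 1) - 1)"
  unfolding mpoly_deg_in_Q_poly[OF \<open>d \<ge> 2\<close> \<open>admissible d I\<close>]
proof (rule Max_insert_zero_eqI)
  show "x \<le> (if I k = d - 1 then d ^ (p - 1) - 1 else (I k + 1) * d ^ (p - 1) - 1)"
    if x: "x \<in> (\<lambda>l. Qexp d p k I l k) ` {..<p}" for x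
  proof -
    obtain l where "l < p" and "x = Qexp_k d p (I k) l"
      using x by (auto simp: Qexp_def)
    with Qexp_k_le_max[OF \<open>l < p\<close> admissible_le[OF \<open>admissible d I\<close>] \<open>d \<ge> 2\<close>] show ?thesis
      by simp
  qed
  show "(if I k = d - 1 then d ^ (p - 1) - 1 else (I k + 1) * d ^ (p - 1) - 1) = 0
    \<or> (if I k = d - 1 then d ^ (p - 1) - 1 else (I k + 1) * d ^ (p - 1) - 1)
      \<in> (\<lambda>l. Qexp d p k I l k) ` {..<p}"
    by (rule Qexp_k_max_attained[OF assms(1,2), of "I k"]) (auto simp: Qexp_def intro!: rev_image_eqI)
qed simp

lemma no_proportional_monomials_Q_poly:
  fixes I I' :: "'n::finite \<Rightarrow> nat"
  assumes "d \<ge> 2" and "p \<ge> 2" and "admissible d I" and "admissible d I'" and "I \<noteq> I'"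
  shows "no_proportional_monomials (Q_poly d p k I) (Q_poly d p k I')"
  unfolding no_proportional_monomials_def Q_poly_def
  using Qexp_eq_imp_eq[OF assms(1-4)] assms(5) by auto

lemma power_Qexp_k_shift:
  fixes W :: "'a::monoid_mult"
  assumes periodic: "W ^ d ^ p = W" and "d \<ge> 1" and "l < p" and "i \<le> d - 1"
  shows "W ^ (Qexp_k d p i l + d ^ Suc l) = W ^ (d ^ l * i + d ^ (p - 1))"
proof (cases "l < p - 1")
  case True
  have "Qexp_k d p i l + d ^ l * (d - i) = d ^ (p - 1)"
    using Qexp_k_lt[OF True] assms by simp
  moreover have "d ^ Suc l = d ^ l * i + d ^ l * (d - i)"
    using assms by (simp flip: add_mult_distrib2)
  ultimately have "Qexp_k d p i l + d ^ Suc l = d ^ l * i + d ^ (p - 1)"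
    by linarith
  then show ?thesis
    by simp
next
  case False
  then have l: "l = p - 1" and p: "Suc l = p"
    using \<open>l < p\<close> by simp_all
  show ?thesis
  proof (cases "i = d - 1")
    case True
    have "Qexp_k d p i l = 0"
      unfolding l Qexp_k_last using True by simp
    moreover have "d ^ l * i + d ^ (p - 1) = d ^ Suc l"
      using True \<open>d \<ge> 1\<close> l by (simp add: algebra_simps flip: add_mult_distrib2)
    ultimately show ?thesis
      by simp
  next
    case False
    have "1 \<le> d ^ (p - 1)"
      using \<open>d \<ge> 1\<close> by (rule one_le_power)
    then have "1 \<le> (i + 1) * d ^ (p - 1)"
      by (simp add: add_mult_distrib)
    then have "Qexp_k d p i l + 1 = d ^ l * i + d ^ (p - 1)"
      unfolding l Qexp_k_last using False by (simp add: algebra_simps)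
    moreover have "W ^ (Qexp_k d p i l + d ^ Suc l) = W ^ (Qexp_k d p i l + 1)"
      using periodic p by (simp add: power_add power_commutes)
    ultimately show ?thesis
      by simp
  qed
qed

lemma pert_ratio_eq_Qexp_monomial:
  fixes I :: "'n::finite \<Rightarrow> nat" and w0 :: "complex^'n"
  assumes "w0 $ k \<noteq> 0" and "(w0 $ k) ^ d ^ p = w0 $ k" and "d \<ge> 1" and "l < p" and "I k \<le> d - 1"
  shows "pert_ratio d (I k) (monomial_off_k d k I w0) (w0 $ k) l
    = (\<Prod>j\<in>UNIV. (w0 $ j) ^ Qexp d p k I l j) / (w0 $ k) ^ d ^ (p - 1)"
proof -
  define W where "W = w0 $ k"
  have "(\<Prod>j\<in>UNIV. (w0 $ j) ^ Qexp d p k I l j)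
      = W ^ Qexp_k d p (I k) l * (\<Prod>j\<in>UNIV - {k}. (w0 $ j) ^ Qexp d p k I l j)"
    unfolding W_def by (subst prod.remove[of _ k]) (simp_all add: Qexp_def)
  also have "(\<Prod>j\<in>UNIV - {k}. (w0 $ j) ^ Qexp d p k I l j) = monomial_off_k d k I w0 l"
    unfolding monomial_off_k_def by (rule prod.cong) (simp_all add: Qexp_def)
  finally have "(\<Prod>j\<in>UNIV. (w0 $ j) ^ Qexp d p k I l j) * W ^ d ^ Suc l
      = W ^ (d ^ l * I k + d ^ (p - 1)) * monomial_off_k d k I w0 l"
    using power_Qexp_k_shift[of W d p l "I k"] assms unfolding W_def by (simp add: power_add algebra_simps)
  moreover have "(W ^ d ^ l) ^ I k = W ^ (d ^ l * I k)"
    by (simp add: power_mult)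
  ultimately show ?thesis
    using \<open>w0 $ k \<noteq> 0\<close> unfolding pert_ratio_def W_def[symmetric]
    by (simp add: field_simps power_add)
qed

lemma F_pert_multiplier_has_deriv_Q_poly:
  fixes I :: "'n::finite \<Rightarrow> nat"
  assumes "d \<ge> 2" and "p \<ge> 1" and "admissible d I"
    and "periodic_point (F0 d) p w0" and "\<forall>j. w0 $ j \<noteq> 0" and "w 0 = w0" and "isCont w 0"
    and "eventually (\<lambda>t. (F_pert d k I t ^^ p) (w t) = w t) (nhds 0)"
  shows "((\<lambda>t. jac_diag (F_pert d k I t ^^ p) k (w t)) has_field_derivative
    mpoly_eval (Q_poly d p k I) w0 / (w0 $ k) ^ d ^ (p - 1)) (at 0)"
proof -
  have "(w0 $ k) ^ d ^ p = w0 $ k"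
    using assms(4) F0_iter_nth[where d = d and m = p and z = w0 and j = k]
    by (simp add: periodic_point_def)
  then have "(\<Sum>l<p. pert_ratio d (I k) (monomial_off_k d k I w0) (w0 $ k) l)
      = (\<Sum>l<p. \<Prod>j\<in>UNIV. (w0 $ j) ^ Qexp d p k I l j) / (w0 $ k) ^ d ^ (p - 1)"
    using assms admissible_le[OF \<open>admissible d I\<close>]
    by (simp add: pert_ratio_eq_Qexp_monomial sum_divide_distrib)
  with F_pert_multiplier_has_deriv[OF assms(1,2,4-8)] show ?thesis
    by (simp add: mpoly_eval_Q_poly[OF \<open>d \<ge> 2\<close> \<open>admissible d I\<close>])
qed

theorem lemma4p2:
  fixes d p :: nat and k :: "'n::finite"
  assumes "d \<ge> 2" and "p \<ge> 1"
  shows "\<exists>Q :: ('n \<Rightarrow> nat) \<Rightarrow> (('n \<Rightarrow> nat) \<Rightarrow> complex).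
    (\<forall>I. admissible d I \<longrightarrow>
       is_mpoly (Q I)
     \<and> (\<forall>w0 :: complex^'n. \<forall>w :: complex \<Rightarrow> complex^'n.
          periodic_point (F0 d) p w0 \<and> (\<forall>j. w0 $ j \<noteq> 0)
          \<and> w 0 = w0 \<and> isCont w 0
          \<and> (\<forall>\<^sub>F t in nhds 0. ((\<lambda>z. F0 d z + t *s Pmon k I z) ^^ p) (w t) = w t)
          \<longrightarrow> ((\<lambda>t. jac_diag ((\<lambda>z. F0 d z + t *s Pmon k I z) ^^ p) k (w t))
                has_field_derivative (mpoly_eval (Q I) w0 / (w0 $ k) ^ (d ^ (p - 1)))) (at 0))
     \<and> (\<forall>j. j \<noteq> k \<longrightarrow> mpoly_deg_in (Q I) j = I j * d ^ (p - 1))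
     \<and> (I k \<le> d - 2 \<longrightarrow> mpoly_deg_in (Q I) k = (I k + 1) * d ^ (p - 1) - 1)
     \<and> (I k = d - 1 \<longrightarrow> mpoly_deg_in (Q I) k = d ^ (p - 1) - 1))
  \<and> (p \<ge> 2 \<longrightarrow> (\<forall>I I'. admissible d I \<and> admissible d I' \<and> I \<noteq> I' \<longrightarrow>
        no_proportional_monomials (Q I) (Q I')))"
proof (intro exI[of _ "Q_poly d p k"] conjI allI impI)
  fix I :: "'n \<Rightarrow> nat"
  assume I: "admissible d I"
  show "is_mpoly (Q_poly d p k I)"
    using assms(1) I by (rule is_mpoly_Q_poly)
  show "((\<lambda>t. jac_diag ((\<lambda>z. F0 d z + t *s Pmon k I z) ^^ p) k (w t)) has_field_derivative
      mpoly_eval (Q_poly d p k I) w0 / (w0 $ k) ^ d ^ (p - 1)) (at 0)"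
    if "periodic_point (F0 d) p w0 \<and> (\<forall>j. w0 $ j \<noteq> 0) \<and> w 0 = w0 \<and> isCont w 0
      \<and> (\<forall>\<^sub>F t in nhds 0. ((\<lambda>z. F0 d z + t *s Pmon k I z) ^^ p) (w t) = w t)" for w0 w
    using F_pert_multiplier_has_deriv_Q_poly[OF assms I] that unfolding F_pert_def by blast
  show "mpoly_deg_in (Q_poly d p k I) j = I j * d ^ (p - 1)" if "j \<noteq> k" for j
    using assms I that by (rule mpoly_deg_in_Q_poly_off_k)
  show "mpoly_deg_in (Q_poly d p k I) k = (I k + 1) * d ^ (p - 1) - 1" if "I k \<le> d - 2"
    using mpoly_deg_in_Q_poly_k[OF assms I] that assms by simp
  show "mpoly_deg_in (Q_poly d p k I) k = d ^ (p - 1) - 1" if "I k = d - 1"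
    using mpoly_deg_in_Q_poly_k[OF assms I] that by simp
next
  fix I I' :: "'n \<Rightarrow> nat"
  assume "p \<ge> 2" and "admissible d I \<and> admissible d I' \<and> I \<noteq> I'"
  then show "no_proportional_monomials (Q_poly d p k I) (Q_poly d p k I')"
    using assms(1) by (intro no_proportional_monomials_Q_poly) auto
qed

end
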